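(* Let $\kappa>-1$, $B=\operatorname{diag}(b_1,\dots,b_n)$, and consider on $T^*V(n,r)$ the flow $$\dot X=P-(1+2\kappa)XP^TX,\qquad \dot P=(1+2\kappa)PX^TP-B^2X+2BXX^TBX+X\Lambda,$$ with $\Lambda=X^TBX-2X^TBXX^TBX-P^TP$. Then on the invariant submanifold $\{(X,P):X^TP=P^TX=0\}$ these equations imply the matrix equation with spectral parameter $\lambda$ $$\frac{d}{dt}L(\lambda)=[L(\lambda),A(\lambda)],$$ $$L(\lambda)=(\mathbf I_n-2XX^T)B(\mathbf I_n-2XX^T)+2\lambda\Phi+\lambda^2B,\qquad A(\lambda)=-2\Phi-\lambda B,$$ where $\Phi=PX^T-XP^T$.
   Context: $V(n,r)=\{X\in M_{n,r}(\mathbb R):X^TX=\mathbf I_r\}$, and $T^*V(n,r)$ is realized as the set of pairs $(X,P)$ of real $n\times r$ matrices with $X^TX=\mathbf I_r$, $X^TP+P^TX=0$. The flow is the Hamiltonian flow of $H=\frac12\operatorname{tr}(P^TP)-(\frac12+\kappa)\operatorname{tr}((X^TP)^2)+\frac12\operatorname{tr}(X^TB^2X)-\frac12\operatorname{tr}(X^TBXX^TBX)$ with respect to the canonical symplectic structure restricted from $\mathbb R^{2nr}$. *)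

theory Defs
  imports "HOL-Analysis.Analysis"
begin

definition diag_mat :: "real ^ 'n \<Rightarrow> real ^ 'n ^ 'n" where
  "diag_mat b = (\<chi> i j. if i = j then b $ i else 0)"

definition commutator :: "real ^ 'n ^ 'n \<Rightarrow> real ^ 'n ^ 'n \<Rightarrow> real ^ 'n ^ 'n" where
  "commutator M N = M ** N - N ** M"

end

theory Submission
  imports Defs
begin

text \<open>On the invariant submanifold the reflection \<open>N = I - 2XX\<^sup>T\<close> anticommutes with
  \<open>\<Phi> = PX\<^sup>T - XP\<^sup>T\<close>, and \<open>\<dot>X = P\<close>. Hence \<open>\<dot>N = 2\<Phi>N = -2N\<Phi>\<close>, so \<open>M = NBN\<close> satisfies
  \<open>\<dot>M = -2[M,\<Phi>]\<close>, while the equation for \<open>P\<close> gives \<open>\<dot>\<Phi> = -[M,B]/2\<close>.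
  These two identities are exactly the \<open>\<lambda>\<^sup>0\<close> and \<open>\<lambda>\<^sup>1\<close> coefficients of \<open>[L(\<lambda>),A(\<lambda>)]\<close>;
  the \<open>\<lambda>\<^sup>2\<close> and \<open>\<lambda>\<^sup>3\<close> coefficients vanish identically.\<close>

lemma bounded_bilinear_matrix_matrix_mult:
  "bounded_bilinear ((**) :: real^'m^'n \<Rightarrow> real^'p^'m \<Rightarrow> real^'p^'n)"
proof -
  have "bilinear ((**) :: real^'m^'n \<Rightarrow> real^'p^'m \<Rightarrow> real^'p^'n)"
    unfolding bilinear_def
    by (auto intro!: linearI simp: matrix_add_ldistrib matrix_scalar_ac
        scalar_matrix_assoc[symmetric] vec_eq_iff matrix_matrix_mult_def sum.distrib
        algebra_simps sum_distrib_left)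
  then show ?thesis
    by (simp add: bilinear_conv_bounded_bilinear)
qed

lemma bounded_linear_transpose: "bounded_linear (transpose :: real^'m^'n \<Rightarrow> real^'n^'m)"
  by (auto intro!: linearI simp: linear_conv_bounded_linear[symmetric] vec_eq_iff transpose_def)

lemmas has_vector_derivative_matrix_mult =
  bounded_bilinear.has_vector_derivative[OF bounded_bilinear_matrix_matrix_mult]

lemmas has_vector_derivative_transpose =
  bounded_linear.has_vector_derivative[OF bounded_linear_transpose]

lemmas has_vector_derivative_scaleR_right =
  bounded_linear.has_vector_derivative[OF bounded_linear_scaleR_right]

lemmas matrix_mult_algebra = matrix_mul_assoc
  bounded_bilinear.add_left[OF bounded_bilinear_matrix_matrix_mult]
  bounded_bilinear.add_right[OF bounded_bilinear_matrix_matrix_mult]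
  bounded_bilinear.diff_left[OF bounded_bilinear_matrix_matrix_mult]
  bounded_bilinear.diff_right[OF bounded_bilinear_matrix_matrix_mult]
  bounded_bilinear.scaleR_left[OF bounded_bilinear_matrix_matrix_mult]
  bounded_bilinear.scaleR_right[OF bounded_bilinear_matrix_matrix_mult]
  bounded_bilinear.minus_left[OF bounded_bilinear_matrix_matrix_mult]
  bounded_bilinear.minus_right[OF bounded_bilinear_matrix_matrix_mult]
  bounded_bilinear.zero_left[OF bounded_bilinear_matrix_matrix_mult]
  bounded_bilinear.zero_right[OF bounded_bilinear_matrix_matrix_mult]
  linear_add[OF bounded_linear.linear[OF bounded_linear_transpose]]
  linear_diff[OF bounded_linear.linear[OF bounded_linear_transpose]]
  linear_cmul[OF bounded_linear.linear[OF bounded_linear_transpose]]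
  linear_neg[OF bounded_linear.linear[OF bounded_linear_transpose]]
  matrix_transpose_mul

text \<open>\<open>matrix_mul_assoc\<close> normalises products to left-associated form, where a relation
  \<open>A ** B = C\<close> only matches in this shape.\<close>

lemma matrix_mul_assoc_subst: "A ** B = C \<Longrightarrow> Z ** A ** B = Z ** C"
  by (metis matrix_mul_assoc)

lemma transpose_diag_mat [simp]: "transpose (diag_mat b) = diag_mat b"
  by (simp add: vec_eq_iff transpose_def diag_mat_def)

lemma commutator_quadratic_pencil:
  fixes M F B :: "real^'n^'n"
  shows "commutator (M + (2 * lam) *\<^sub>R F + lam\<^sup>2 *\<^sub>R B) (- 2 *\<^sub>R F - lam *\<^sub>R B)
     = - 2 *\<^sub>R commutator M F - lam *\<^sub>R commutator M B"
  by (simp add: commutator_def matrix_mult_algebra algebra_simps power2_eq_square)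

lemma reflection_anticommutes:
  fixes X P :: "real^'r^'n"
  assumes XX: "transpose X ** X = mat 1" and XP: "transpose X ** P = 0"
    and PX: "transpose P ** X = 0"
  defines "N \<equiv> mat 1 - 2 *\<^sub>R (X ** transpose X)"
    and "\<Phi> \<equiv> P ** transpose X - X ** transpose P"
  shows "N ** \<Phi> = X ** transpose P + P ** transpose X"
    and "\<Phi> ** N = - (X ** transpose P + P ** transpose X)"
  by (simp_all add: N_def \<Phi>_def matrix_mult_algebra matrix_mul_assoc_subst[OF XX]
      matrix_mul_assoc_subst[OF XP] matrix_mul_assoc_subst[OF PX])
    (simp_all add: scaleR_2 algebra_simps)

lemma has_vector_derivative_reflected_conjugate:
  fixes X P :: "real \<Rightarrow> real^'r^'n" and B :: "real^'n^'n"
  assumes dX: "(X has_vector_derivative P t) (at t)"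
    and XX: "transpose (X t) ** X t = mat 1" and XP: "transpose (X t) ** P t = 0"
    and PX: "transpose (P t) ** X t = 0"
  defines "N \<equiv> \<lambda>s. mat 1 - 2 *\<^sub>R (X s ** transpose (X s))"
    and "\<Phi> \<equiv> P t ** transpose (X t) - X t ** transpose (P t)"
  shows "((\<lambda>s. N s ** B ** N s) has_vector_derivative
           - 2 *\<^sub>R commutator (N t ** B ** N t) \<Phi>) (at t)"
proof -
  define dN where "dN = - 2 *\<^sub>R (X t ** transpose (P t) + P t ** transpose (X t))"
  have "((\<lambda>s. X s ** transpose (X s)) has_vector_derivative
          X t ** transpose (P t) + P t ** transpose (X t)) (at t)"
    using has_vector_derivative_matrix_mult[OF dX has_vector_derivative_transpose[OF dX]] .
  then have dN: "(N has_vector_derivative dN) (at t)"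
    unfolding N_def dN_def
    using has_vector_derivative_diff[OF has_vector_derivative_const
        has_vector_derivative_scaleR_right]
    by simp
  have dM: "((\<lambda>s. N s ** B ** N s) has_vector_derivative
          N t ** B ** dN + dN ** B ** N t) (at t)"
    by (rule has_vector_derivative_eq_rhs[OF has_vector_derivative_matrix_mult
          [OF has_vector_derivative_matrix_mult[OF dN has_vector_derivative_const] dN]])
      (simp add: matrix_mult_algebra)
  have dN_right: "dN = 2 *\<^sub>R (\<Phi> ** N t)" and dN_left: "dN = - 2 *\<^sub>R (N t ** \<Phi>)"
    unfolding dN_def N_def \<Phi>_def reflection_anticommutes[OF XX XP PX]
    by (simp_all add: scaleR_right_distrib scaleR_right_diff_distrib)
  have "N t ** B ** dN = - 2 *\<^sub>R (N t ** B ** N t ** \<Phi>)"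
    by (simp add: dN_left matrix_mult_algebra)
  moreover have "dN ** B ** N t = 2 *\<^sub>R (\<Phi> ** (N t ** B ** N t))"
    by (simp add: dN_right matrix_mult_algebra)
  ultimately show ?thesis
    using dM by (simp add: commutator_def algebra_simps)
qed

lemma has_vector_derivative_skew_outer:
  fixes X P :: "real \<Rightarrow> real^'r^'n"
  assumes dX: "(X has_vector_derivative P t) (at t)" and dP: "(P has_vector_derivative D) (at t)"
  shows "((\<lambda>s. P s ** transpose (X s) - X s ** transpose (P s)) has_vector_derivative
           D ** transpose (X t) - X t ** transpose D) (at t)"
  by (rule has_vector_derivative_eq_rhs[OF has_vector_derivative_diff
        [OF has_vector_derivative_matrix_mult[OF dP has_vector_derivative_transpose[OF dX]]
            has_vector_derivative_matrix_mult[OF dX has_vector_derivative_transpose[OF dP]]]])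
    simp

lemma momentum_flow_skew_part:
  fixes X P :: "real^'r^'n" and B :: "real^'n^'n" and \<kappa> :: real
  assumes XP: "transpose X ** P = 0" and PX: "transpose P ** X = 0"
    and B: "transpose B = B"
  defines "D \<equiv> (1 + 2 * \<kappa>) *\<^sub>R (P ** transpose X ** P)
           - B ** B ** X
           + 2 *\<^sub>R (B ** X ** transpose X ** B ** X)
           + X ** (transpose X ** B ** X
                     - 2 *\<^sub>R (transpose X ** B ** X ** transpose X ** B ** X)
                     - transpose P ** P)"
    and "N \<equiv> mat 1 - 2 *\<^sub>R (X ** transpose X)"
  shows "D ** transpose X - X ** transpose D = - (1/2) *\<^sub>R commutator (N ** B ** N) B"
  by (simp add: D_def N_def B commutator_def matrix_mult_algebra matrix_mul_assoc_subst[OF XP]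
      matrix_mul_assoc_subst[OF PX] algebra_simps)

theorem theorem9:
  fixes X P :: "real \<Rightarrow> real ^ 'r ^ 'n"
    and b :: "real ^ 'n"
    and \<kappa> :: real
    and T :: "real set" and lam :: real
  assumes kappa: "\<kappa> > -1"
    and T_open: "open T"
    and stiefel: "\<And>t. t \<in> T \<Longrightarrow> transpose (X t) ** X t = mat 1"
    and invariant: "\<And>t. t \<in> T \<Longrightarrow> transpose (X t) ** P t = 0 \<and> transpose (P t) ** X t = 0"
    and eqX: "\<And>t. t \<in> T \<Longrightarrow>
       (X has_vector_derivative
          (P t - (1 + 2 * \<kappa>) *\<^sub>R (X t ** transpose (P t) ** X t))) (at t)"
    and eqP: "\<And>t. t \<in> T \<Longrightarrow>
       (P has_vector_derivative
          ((1 + 2 * \<kappa>) *\<^sub>R (P t ** transpose (X t) ** P t)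
           - diag_mat b ** diag_mat b ** X t
           + 2 *\<^sub>R (diag_mat b ** X t ** transpose (X t) ** diag_mat b ** X t)
           + X t ** (transpose (X t) ** diag_mat b ** X t
                     - 2 *\<^sub>R (transpose (X t) ** diag_mat b ** X t ** transpose (X t) ** diag_mat b ** X t)
                     - transpose (P t) ** P t))) (at t)"
    and t: "t \<in> T"
  shows
    "let B = diag_mat b;
         \<Phi> = (\<lambda>s. P s ** transpose (X s) - X s ** transpose (P s));
         L = (\<lambda>s. (mat 1 - 2 *\<^sub>R (X s ** transpose (X s))) ** B ** (mat 1 - 2 *\<^sub>R (X s ** transpose (X s)))
                  + (2 * lam) *\<^sub>R \<Phi> s + (lam^2) *\<^sub>R B);
         A = (\<lambda>s. - 2 *\<^sub>R \<Phi> s - lam *\<^sub>R B)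
     in (L has_vector_derivative commutator (L t) (A t)) (at t)"
proof -
  have XX: "transpose (X t) ** X t = mat 1" using stiefel t by blast
  have XP: "transpose (X t) ** P t = 0" and PX: "transpose (P t) ** X t = 0"
    using invariant t by blast+
  have dX: "(X has_vector_derivative P t) (at t)"
    using eqX[OF t] by (simp add: matrix_mul_assoc[symmetric] PX)
  define M where "M = (mat 1 - 2 *\<^sub>R (X t ** transpose (X t))) ** diag_mat b **
                      (mat 1 - 2 *\<^sub>R (X t ** transpose (X t)))"
  define \<Phi> where "\<Phi> = (\<lambda>s. P s ** transpose (X s) - X s ** transpose (P s))"
  have dM: "((\<lambda>s. (mat 1 - 2 *\<^sub>R (X s ** transpose (X s))) ** diag_mat b **
                 (mat 1 - 2 *\<^sub>R (X s ** transpose (X s))))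
             has_vector_derivative - 2 *\<^sub>R commutator M (\<Phi> t)) (at t)"
    using has_vector_derivative_reflected_conjugate[where X = X and P = P and t = t,
        OF dX XX XP PX]
    by (simp add: M_def \<Phi>_def)
  have d\<Phi>: "(\<Phi> has_vector_derivative - (1/2) *\<^sub>R commutator M (diag_mat b)) (at t)"
    using has_vector_derivative_skew_outer[OF dX eqP[OF t]]
    by (simp add: \<Phi>_def M_def momentum_flow_skew_part[OF XP PX transpose_diag_mat])
  show ?thesis
    unfolding Let_def \<Phi>_def[symmetric]
    by (rule has_vector_derivative_eq_rhs[OF has_vector_derivative_add[OF
          has_vector_derivative_add[OF dM has_vector_derivative_scaleR_right[OF d\<Phi>]]
          has_vector_derivative_const]])
      (subst commutator_quadratic_pencil, simp add: M_def)
qed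

end
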